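(* The containment relation $\ge$ is a partial order on the set $[\mathrm{Cay}]$ of equivalence classes of Cayley permutations.
   Context: A Cayley permutation is a word of positive integers in which every integer from $1$ to its maximum occurs; $\mathrm{Cay}$ is the set of all of them. Containment $y\le x$: indices $i_1<\dots<i_k$ ($k$ the length of $y$) with $x(i_s)<x(i_t)\iff y(s)<y(t)$ and $x(i_s)=x(i_t)\iff y(s)=y(t)$. For $x$ of length $n$, $\gamma(x)$ is the permutation obtained by sorting the pairs $(x(i),i)$ increasingly by first coordinate, ties by decreasing second coordinate, and reading the second coordinates. $x\sim y$ iff $\gamma(x)=\gamma(y)$; $[x]$ is the class of $x$ and $[\mathrm{Cay}]$ the set of classes. For classes, $[x]\ge[y]$ iff $x'\ge y'$ for some $x'\in[x]$ and $y'\in[y]$. *)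

theory Defs
  imports Main "HOL-Library.Product_Lexorder"
begin

text \<open>The empty word is included (its set of values is the empty interval).\<close>
definition Cay :: "nat list set" where
  "Cay = {x. set x = {1..Max (insert 0 (set x))}}"

definition contains :: "nat list \<Rightarrow> nat list \<Rightarrow> bool" where
  "contains x y \<longleftrightarrow> (\<exists>f :: nat \<Rightarrow> nat.
      (\<forall>s t. s < t \<and> t < length y \<longrightarrow> f s < f t) \<and>
      (\<forall>s < length y. f s < length x) \<and>
      (\<forall>s < length y. \<forall>t < length y.
          (x ! f s < x ! f t \<longleftrightarrow> y ! s < y ! t) \<and>
          (x ! f s = x ! f t \<longleftrightarrow> y ! s = y ! t)))"

definition gamma :: "nat list \<Rightarrow> nat list" where
  "gamma x = map snd (sort_key (\<lambda>(v, i). (v, - int i)) (zip x [1..<length x + 1]))"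

definition cay_equiv :: "(nat list \<times> nat list) set" where
  "cay_equiv = {(x, y). x \<in> Cay \<and> y \<in> Cay \<and> gamma x = gamma y}"

definition Cay_classes :: "nat list set set" where
  "Cay_classes = Cay // cay_equiv"

definition class_ge :: "nat list set \<Rightarrow> nat list set \<Rightarrow> bool" where
  "class_ge X Y \<longleftrightarrow> (\<exists>x'\<in>X. \<exists>y'\<in>Y. contains x' y')"

end

theory Submission
  imports Defs
begin

(* The class of a Cayley permutation x has a canonical member, the permutation standardize x
   that ranks the positions of x by their letters, breaking ties so that of two equal letters
   the later one becomes smaller. Since gamma x lists the positions of x in exactly this order,
   gamma x = gamma y iff x and y induce the same tie-broken order on positions iff
   standardize x = standardize y. An occurrence of y in x is increasing, hence respects the
   tie-breaking, so it is also an occurrence of standardize y in standardize x; therefore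
   [x] >= [y] iff standardize x contains standardize y. Containment is reflexive and transitive,
   and two permutations containing each other have the same length, so the occurrence is the
   identity and they coincide. *)

lemma insort_key_map: "insort_key f (g a) (map g xs) = map g (insort_key (\<lambda>a. f (g a)) a xs)"
  by (induction xs) auto

lemma sort_key_map: "sort_key f (map g xs) = map g (sort_key (\<lambda>a. f (g a)) xs)"
  by (induction xs) (simp_all add: insort_key_map)

lemma insort_key_cong_le:
  "(\<And>b. b \<in> set xs \<Longrightarrow> f a \<le> f b \<longleftrightarrow> g a \<le> g b) \<Longrightarrow> insort_key f a xs = insort_key g a xs"
  by (induction xs) auto

lemma sort_key_cong_less:
  fixes f :: "'a \<Rightarrow> 'b::linorder" and g :: "'a \<Rightarrow> 'c::linorder"
  assumes "\<And>a b. a \<in> set xs \<Longrightarrow> b \<in> set xs \<Longrightarrow> f a < f b \<longleftrightarrow> g a < g b"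
  shows "sort_key f xs = sort_key g xs"
  using assms
proof (induction xs)
  case (Cons a xs)
  have "insort_key f a (sort_key g xs) = insort_key g a (sort_key g xs)"
    by (rule insort_key_cong_le) (use Cons.prems in \<open>auto simp: not_less[symmetric]\<close>)
  with Cons show ?case by simp
qed simp

lemma sorted_wrt_sort_key_less:
  assumes "inj_on f (set xs)" "distinct xs"
  shows "sorted_wrt (\<lambda>a b. f a < f b) (sort_key f xs)"
proof -
  have "distinct (map f (sort_key f xs))"
    using assms by (simp add: distinct_map)
  then have "sorted_wrt (<) (map f (sort_key f xs))"
    by (simp add: strict_sorted_iff)
  then show ?thesis by (simp add: sorted_wrt_map)
qed

lemma sorted_wrt_less_key_iff:
  fixes f :: "'a \<Rightarrow> 'b::order" and g :: "'a \<Rightarrow> 'c::order"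
  assumes f: "sorted_wrt (\<lambda>a b. f a < f b) xs" and g: "sorted_wrt (\<lambda>a b. g a < g b) xs"
    and "a \<in> set xs" "b \<in> set xs"
  shows "f a < f b \<longleftrightarrow> g a < g b"
proof -
  obtain p q where pq: "p < length xs" "q < length xs" "a = xs ! p" "b = xs ! q"
    using assms(3,4) by (metis in_set_conv_nth)
  have less: "f (xs ! p) < f (xs ! q) \<and> g (xs ! p) < g (xs ! q)" if "p < q" "q < length xs" for p q
    using that f g by (auto simp: sorted_wrt_iff_nth_less)
  consider "p < q" | "p = q" | "q < p" by linarith
  then show ?thesis
  proof cases
    case 1
    then show ?thesis using less pq by simp
  next
    case 2
    then show ?thesis using pq by simp
  next
    case 3
    then have "f b < f a" "g b < g a" using less pq by simp_all
    then show ?thesis by (simp add: less_not_sym)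
  qed
qed

lemma card_key_less_strict_mono:
  fixes f :: "nat \<Rightarrow> 'a::order"
  assumes "f i < f j" "i < n"
  shows "card {k. k < n \<and> f k < f i} < card {k. k < n \<and> f k < f j}"
  by (rule psubset_card_mono) (use assms in \<open>auto intro: less_trans\<close>)

lemma card_key_less_less_iff:
  fixes f :: "nat \<Rightarrow> 'a::linorder"
  assumes "inj_on f {..<n}" "i < n" "j < n"
  shows "card {k. k < n \<and> f k < f i} < card {k. k < n \<and> f k < f j} \<longleftrightarrow> f i < f j"
proof
  assume card_less: "card {k. k < n \<and> f k < f i} < card {k. k < n \<and> f k < f j}"
  show "f i < f j"
  proof (rule ccontr)
    assume "\<not> f i < f j"
    then consider "f j < f i" | "i = j"
      using assms inj_on_eq_iff[OF assms(1)] by fastforce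
    then show False
      using card_less card_key_less_strict_mono[of f j i n] assms(3) by cases auto
  qed
qed (rule card_key_less_strict_mono[OF _ assms(2)])

lemma increasing_endo_lessThan_eq_id:
  fixes f :: "nat \<Rightarrow> nat"
  assumes mono: "\<And>s t. s < t \<Longrightarrow> t < n \<Longrightarrow> f s < f t" and endo: "\<And>s. s < n \<Longrightarrow> f s < n"
    and "i < n"
  shows "f i = i"
proof -
  have sorted: "sorted_wrt (<) (map f [0..<n])"
    using mono by (auto simp: sorted_wrt_iff_nth_less)
  then have "card (set (map f [0..<n])) = n"
    by (simp add: strict_sorted_iff distinct_card del: set_map)
  moreover have "set (map f [0..<n]) \<subseteq> {0..<n}"
    using endo by auto
  ultimately have "set (map f [0..<n]) = set [0..<n]"
    by (simp add: card_subset_eq del: set_map)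
  with sorted have "map f [0..<n] = [0..<n]"
    by (intro sorted_distinct_set_unique) (simp_all add: strict_sorted_iff del: set_map)
  then have "map f [0..<n] ! i = [0..<n] ! i"
    by simp
  with assms(3) show ?thesis
    by simp
qed

lemma increasing_less_iff:
  fixes f :: "nat \<Rightarrow> nat"
  assumes "\<forall>s t. s < t \<and> t < n \<longrightarrow> f s < f t" "s < n" "t < n"
  shows "f s < f t \<longleftrightarrow> s < t" and "f s = f t \<longleftrightarrow> s = t"
proof -
  have "s < t \<Longrightarrow> f s < f t" "t < s \<Longrightarrow> f t < f s"
    using assms by blast+
  then show "f s < f t \<longleftrightarrow> s < t" and "f s = f t \<longleftrightarrow> s = t"
    by (cases s t rule: linorder_cases; simp)+
qed

definition tie_key :: "nat list \<Rightarrow> nat \<Rightarrow> nat \<times> int" where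
  "tie_key x i = (x ! i, - int i)"

lemma tie_key_less_iff: "tie_key x i < tie_key x j \<longleftrightarrow> x ! i < x ! j \<or> x ! i = x ! j \<and> j < i"
  by (auto simp: tie_key_def less_prod_def)

lemma inj_tie_key: "inj (tie_key x)"
  by (auto simp: inj_on_def tie_key_def)

definition same_tie_order :: "nat list \<Rightarrow> nat list \<Rightarrow> bool" where
  "same_tie_order x y \<longleftrightarrow> length x = length y \<and>
     (\<forall>i < length x. \<forall>j < length x. tie_key x i < tie_key x j \<longleftrightarrow> tie_key y i < tie_key y j)"

lemma same_tie_order_sym: "same_tie_order x y \<Longrightarrow> same_tie_order y x"
  by (simp add: same_tie_order_def)

lemma same_tie_order_trans: "same_tie_order x y \<Longrightarrow> same_tie_order y z \<Longrightarrow> same_tie_order x z"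
  by (simp add: same_tie_order_def)

lemma gamma_conv_sort_key: "gamma x = map Suc (sort_key (tie_key x) [0..<length x])"
proof -
  have zip: "zip x [1..<length x + 1] = map (\<lambda>i. (x ! i, Suc i)) [0..<length x]"
    by (rule nth_equalityI) (auto simp del: upt_Suc)
  have "sort_key (\<lambda>i. (x ! i, - int (Suc i))) [0..<length x] = sort_key (tie_key x) [0..<length x]"
    by (rule sort_key_cong_less) (auto simp: tie_key_def less_prod_def)
  then show ?thesis
    unfolding gamma_def zip sort_key_map by simp
qed

lemma length_gamma: "length (gamma x) = length x"
  by (simp add: gamma_conv_sort_key)

lemma gamma_eq_iff_same_tie_order: "gamma x = gamma y \<longleftrightarrow> same_tie_order x y"
proof
  assume eq: "gamma x = gamma y"
  then have len: "length x = length y"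
    by (metis length_gamma)
  let ?zs = "sort_key (tie_key x) [0..<length x]"
  have zs: "?zs = sort_key (tie_key y) [0..<length x]"
    using eq len by (simp add: gamma_conv_sort_key inj_map_eq_map)
  have sorted: "sorted_wrt (\<lambda>a b. tie_key z a < tie_key z b) (sort_key (tie_key z) [0..<length x])" for z
    by (rule sorted_wrt_sort_key_less) (auto intro: inj_on_subset[OF inj_tie_key])
  have "tie_key x i < tie_key x j \<longleftrightarrow> tie_key y i < tie_key y j" if "i < length x" "j < length x" for i j
    by (rule sorted_wrt_less_key_iff[OF sorted[of x]]) (use that zs sorted[of y] in simp_all)
  with len show "same_tie_order x y"
    by (simp add: same_tie_order_def)
next
  assume "same_tie_order x y"
  then show "gamma x = gamma y"
    by (auto simp: gamma_conv_sort_key same_tie_order_def intro!: sort_key_cong_less)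
qed

definition standardize :: "nat list \<Rightarrow> nat list" where
  "standardize x = map (\<lambda>i. Suc (card {j. j < length x \<and> tie_key x j < tie_key x i})) [0..<length x]"

lemma length_standardize [simp]: "length (standardize x) = length x"
  by (simp add: standardize_def)

lemma standardize_less_iff:
  assumes "i < length x" "j < length x"
  shows "standardize x ! i < standardize x ! j \<longleftrightarrow> tie_key x i < tie_key x j"
  using card_key_less_less_iff[OF inj_on_subset[OF inj_tie_key] assms] assms
  by (simp add: standardize_def)

lemma standardize_eq_iff:
  assumes "i < length x" "j < length x"
  shows "standardize x ! i = standardize x ! j \<longleftrightarrow> i = j"
  using standardize_less_iff[OF assms] standardize_less_iff[OF assms(2,1)]
    inj_eq[OF inj_tie_key, of x i j]
  by (metis less_irrefl linorder_neqE)

lemma set_standardize: "set (standardize x) = {1..length x}"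
proof (rule card_subset_eq)
  have "card {j. j < length x \<and> tie_key x j < tie_key x i} < length x" if "i < length x" for i
    by (rule psubset_card_mono[of "{..<length x}", simplified]) (use that in auto)
  then show "set (standardize x) \<subseteq> {1..length x}"
    by (auto simp: standardize_def Suc_le_eq)
  have "distinct (standardize x)"
    by (simp add: distinct_conv_nth standardize_eq_iff)
  then show "card (set (standardize x)) = card {1..length x}"
    by (simp add: distinct_card)
qed simp

lemma standardize_in_Cay: "standardize x \<in> Cay"
proof -
  have "Max (insert 0 {1..n}) = n" for n :: nat
    by (rule Max_eqI) auto
  then show ?thesis
    by (simp add: Cay_def set_standardize)
qed

lemma same_tie_order_standardize: "same_tie_order x (standardize x)"
  unfolding same_tie_order_def
  by (auto simp: tie_key_less_iff[of "standardize x"] standardize_less_iff standardize_eq_iff)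

lemma standardize_cong: "same_tie_order x y \<Longrightarrow> standardize x = standardize y"
  unfolding same_tie_order_def standardize_def
  by (auto intro!: arg_cong[where f = card])

lemma standardize_idem: "standardize (standardize x) = standardize x"
  by (rule standardize_cong[OF same_tie_order_sym[OF same_tie_order_standardize]])

lemma standardize_eq_iff_gamma_eq: "standardize x = standardize y \<longleftrightarrow> gamma x = gamma y"
proof
  assume "standardize x = standardize y"
  then have "same_tie_order x y"
    using same_tie_order_standardize[of x] same_tie_order_standardize[of y]
    by (metis same_tie_order_sym same_tie_order_trans)
  then show "gamma x = gamma y"
    by (simp add: gamma_eq_iff_same_tie_order)
qed (simp add: gamma_eq_iff_same_tie_order standardize_cong)

lemma contains_refl: "contains x x"
  unfolding contains_def by (rule exI[of _ id]) simp

lemma contains_trans: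
  assumes "contains x y" "contains y z"
  shows "contains x z"
proof -
  obtain f where f_mono: "\<forall>s t. s < t \<and> t < length y \<longrightarrow> f s < f t"
    and f_endo: "\<forall>s < length y. f s < length x"
    and f_pattern: "\<forall>s < length y. \<forall>t < length y.
       (x ! f s < x ! f t \<longleftrightarrow> y ! s < y ! t) \<and> (x ! f s = x ! f t \<longleftrightarrow> y ! s = y ! t)"
    using assms(1) unfolding contains_def by blast
  obtain g where g_mono: "\<forall>s t. s < t \<and> t < length z \<longrightarrow> g s < g t"
    and g_endo: "\<forall>s < length z. g s < length y"
    and g_pattern: "\<forall>s < length z. \<forall>t < length z.
       (y ! g s < y ! g t \<longleftrightarrow> z ! s < z ! t) \<and> (y ! g s = y ! g t \<longleftrightarrow> z ! s = z ! t)"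
    using assms(2) unfolding contains_def by blast
  have "f (g s) < f (g t)" if "s < t" "t < length z" for s t
    using that f_mono g_mono g_endo by simp
  moreover have "f (g s) < length x" if "s < length z" for s
    using that f_endo g_endo by simp
  moreover have "(x ! f (g s) < x ! f (g t) \<longleftrightarrow> z ! s < z ! t) \<and> (x ! f (g s) = x ! f (g t) \<longleftrightarrow> z ! s = z ! t)"
    if "s < length z" "t < length z" for s t
    using that f_pattern g_pattern g_endo by simp
  ultimately show ?thesis
    unfolding contains_def by (intro exI[of _ "f \<circ> g"]) simp
qed

lemma contains_length_le: "contains x y \<Longrightarrow> length y \<le> length x"
  unfolding contains_def
proof (elim exE conjE)
  fix f
  assume mono: "\<forall>s t. s < t \<and> t < length y \<longrightarrow> f s < f t" and endo: "\<forall>s < length y. f s < length x"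
  have "inj_on f {..<length y}"
    by (rule inj_onI) (simp add: increasing_less_iff(2)[OF mono])
  moreover have "f ` {..<length y} \<subseteq> {..<length x}"
    using endo by auto
  ultimately show "length y \<le> length x"
    by (metis card_inj_on_le card_lessThan finite_lessThan)
qed

lemma same_tie_order_if_contains_same_length:
  assumes "contains x y" "length x = length y"
  shows "same_tie_order x y"
proof -
  obtain f where mono: "\<forall>s t. s < t \<and> t < length y \<longrightarrow> f s < f t"
    and endo: "\<forall>s < length y. f s < length x"
    and pattern: "\<forall>s < length y. \<forall>t < length y.
       (x ! f s < x ! f t \<longleftrightarrow> y ! s < y ! t) \<and> (x ! f s = x ! f t \<longleftrightarrow> y ! s = y ! t)"
    using assms(1) unfolding contains_def by blast
  have "f s = s" if "s < length y" for s
    by (rule increasing_endo_lessThan_eq_id[of "length y"]) (use mono endo assms(2) that in auto)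
  with pattern assms(2) show ?thesis
    by (simp add: same_tie_order_def tie_key_less_iff)
qed

lemma contains_standardize: "contains x y \<Longrightarrow> contains (standardize x) (standardize y)"
  unfolding contains_def
proof (elim exE conjE)
  fix f
  assume mono: "\<forall>s t. s < t \<and> t < length y \<longrightarrow> f s < f t"
    and endo: "\<forall>s < length y. f s < length x"
    and pattern: "\<forall>s < length y. \<forall>t < length y.
       (x ! f s < x ! f t \<longleftrightarrow> y ! s < y ! t) \<and> (x ! f s = x ! f t \<longleftrightarrow> y ! s = y ! t)"
  note order = increasing_less_iff[OF mono]
  have ties: "tie_key x (f s) < tie_key x (f t) \<longleftrightarrow> tie_key y s < tie_key y t"
    if "s < length y" "t < length y" for s t
    using pattern that order(1)[OF that(2,1)] by (simp add: tie_key_less_iff)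
  then show "\<exists>f. (\<forall>s t. s < t \<and> t < length (standardize y) \<longrightarrow> f s < f t) \<and>
      (\<forall>s < length (standardize y). f s < length (standardize x)) \<and>
      (\<forall>s < length (standardize y). \<forall>t < length (standardize y).
         (standardize x ! f s < standardize x ! f t \<longleftrightarrow> standardize y ! s < standardize y ! t) \<and>
         (standardize x ! f s = standardize x ! f t \<longleftrightarrow> standardize y ! s = standardize y ! t))"
    using endo order(2) by (intro exI[of _ f]) (simp add: mono standardize_less_iff standardize_eq_iff)
qed

lemma standardize_eq_if_contains_both:
  assumes "contains (standardize x) (standardize y)" "contains (standardize y) (standardize x)"
  shows "standardize x = standardize y"
proof -
  have "length (standardize x) = length (standardize y)"
    using assms by (simp add: contains_length_le le_antisym del: length_standardize)
  then have "same_tie_order (standardize x) (standardize y)"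
    by (rule same_tie_order_if_contains_same_length[OF assms(1)])
  then show ?thesis
    using standardize_cong standardize_idem by metis
qed

lemma cay_equiv_Image: "x \<in> Cay \<Longrightarrow> cay_equiv `` {x} = {y \<in> Cay. standardize y = standardize x}"
  by (auto simp: cay_equiv_def standardize_eq_iff_gamma_eq)

lemma standardize_in_cay_equiv_Image: "x \<in> Cay \<Longrightarrow> standardize x \<in> cay_equiv `` {x}"
  by (simp add: cay_equiv_Image standardize_in_Cay standardize_idem)

definition class_standardize :: "nat list set \<Rightarrow> nat list" where
  "class_standardize X = standardize (SOME x. x \<in> X)"

lemma class_standardize_Image:
  assumes "x \<in> Cay"
  shows "class_standardize (cay_equiv `` {x}) = standardize x"
proof -
  have "(SOME z. z \<in> cay_equiv `` {x}) \<in> cay_equiv `` {x}"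
    using someI[of "\<lambda>z. z \<in> cay_equiv `` {x}", OF standardize_in_cay_equiv_Image[OF assms]] .
  then show ?thesis
    using assms by (simp add: class_standardize_def cay_equiv_Image)
qed

lemma class_ge_iff_contains:
  assumes "X \<in> Cay_classes" "Y \<in> Cay_classes"
  shows "class_ge X Y \<longleftrightarrow> contains (class_standardize X) (class_standardize Y)"
proof -
  obtain x y where x: "x \<in> Cay" "X = cay_equiv `` {x}" and y: "y \<in> Cay" "Y = cay_equiv `` {y}"
    using assms unfolding Cay_classes_def by (elim quotientE)
  have "class_ge X Y \<longleftrightarrow> contains (standardize x) (standardize y)"
  proof
    assume "class_ge X Y"
    then obtain x' y' where "x' \<in> X" "y' \<in> Y" "contains x' y'"
      unfolding class_ge_def by blast
    with x y show "contains (standardize x) (standardize y)"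
      by (metis (mono_tags) cay_equiv_Image contains_standardize mem_Collect_eq)
  next
    assume "contains (standardize x) (standardize y)"
    with x y standardize_in_cay_equiv_Image[OF x(1)] standardize_in_cay_equiv_Image[OF y(1)]
    show "class_ge X Y"
      unfolding class_ge_def by blast
  qed
  with x y show ?thesis
    by (simp add: class_standardize_Image)
qed

lemma inj_on_class_standardize: "inj_on class_standardize Cay_classes"
proof (rule inj_onI)
  fix X Y
  assume "X \<in> Cay_classes" "Y \<in> Cay_classes" and eq: "class_standardize X = class_standardize Y"
  then obtain x y where x: "x \<in> Cay" "X = cay_equiv `` {x}" and y: "y \<in> Cay" "Y = cay_equiv `` {y}"
    unfolding Cay_classes_def by (elim quotientE)
  from eq have "standardize x = standardize y"
    by (simp add: x y class_standardize_Image)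
  with x y show "X = Y"
    by (simp add: cay_equiv_Image)
qed

lemma class_standardize_antisym:
  assumes "X \<in> Cay_classes" "Y \<in> Cay_classes"
    and "contains (class_standardize X) (class_standardize Y)"
    and "contains (class_standardize Y) (class_standardize X)"
  shows "X = Y"
proof -
  have "class_standardize X = class_standardize Y"
    using assms(3,4) unfolding class_standardize_def by (rule standardize_eq_if_contains_both)
  with assms(1,2) show ?thesis
    by (simp add: inj_on_eq_iff[OF inj_on_class_standardize])
qed

theorem proposition4p15:
  shows "partial_order_on Cay_classes
           {(X, Y). X \<in> Cay_classes \<and> Y \<in> Cay_classes \<and> class_ge X Y}"
    (is "partial_order_on _ ?R")
proof -
  have "refl_on Cay_classes ?R"
    by (auto intro!: refl_onI simp: class_ge_iff_contains contains_refl)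
  moreover have "trans ?R"
    by (auto intro!: transI simp: class_ge_iff_contains intro: contains_trans)
  moreover have "antisym ?R"
    by (rule antisymI) (clarsimp simp: class_ge_iff_contains class_standardize_antisym)
  ultimately show ?thesis
    by (auto simp: partial_order_on_def preorder_on_def)
qed

end
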